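(* The set $\mathcal{SM}$ of strong minuscule elements of $W$ decomposes as the disjoint union \[\mathcal{SM}=\bigsqcup_{i\in K}\mathcal{SM}_i,\qquad \mathcal{SM}_i:=\{w\in\mathcal{SM}\mid \Lambda_w=\Lambda_i\}.\] In particular, for every strong minuscule $w$, $\Lambda_w$ is a fundamental weight $\Lambda_i$ with $i\in K$.
   Context: Let $\mathfrak g$ be a finite-dimensional simple Lie algebra over $\mathbb C$ of type $\mathrm A_n$, $\mathrm B_n$, $\mathrm C_n$ or $\mathrm D_n$, with index set $I=\{1,\dots,n\}$, simple roots $\alpha_i$, simple coroots $\alpha_i^\vee$, fundamental weights $\Lambda_i$, integral weights $P=\bigoplus_i\mathbb Z\Lambda_i$, dominant integral weights $P^+=\sum_i\mathbb Z_{\ge0}\Lambda_i$, and Weyl group $W$ generated by simple reflections $s_i$. The Dynkin diagrams are labeled as follows: type $\mathrm A_n$: chain $1-2-\cdots-n$; type $\mathrm B_n$: chain $1-2-\cdots-n$ with a double bond between $1$ and $2$, $\alpha_1$ short and $\alpha_2,\dots,\alpha_n$ long; type $\mathrm C_n$: chain $1-2-\cdots-n$ with a double bond between $1$ and $2$, $\alpha_1$ long and $\alpha_2,\dots,\alpha_n$ short; type $\mathrm D_n$: chain $n-(n-1)-\cdots-3$ with node $3$ joined to both nodes $1$ and $2$. Set $K=I$ in types $\mathrm A_n,\mathrm D_n$, $K=\{1\}$ in type $\mathrm B_n$, $K=I\setminus\{1\}$ in type $\mathrm C_n$. For $\Lambda\in P$, $w\in W$ is $\Lambda$-minuscule if there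 is a reduced expression $w=s_{i_1}\cdots s_{i_r}$ with $\langle s_{i_{p+1}}\cdots s_{i_r}(\Lambda),\alpha_{i_p}^\vee\rangle=1$ for all $1\le p\le r$; $w$ is dominant minuscule if it is $\Lambda$-minuscule for some $\Lambda\in P^+$. A dominant minuscule $w$ is strong minuscule if there is a unique $\Lambda\in P^+$, denoted $\Lambda_w$, such that $w$ is $\Lambda$-minuscule; $\mathcal{SM}$ denotes the set of strong minuscule elements. *)

theory Defs
  imports Main
begin

datatype cartan_type = TA | TB | TC | TD

definition valid_type :: "cartan_type \<Rightarrow> nat \<Rightarrow> bool" where
  "valid_type t n = (case t of TA \<Rightarrow> n \<ge> 1 | TB \<Rightarrow> n \<ge> 2 | TC \<Rightarrow> n \<ge> 2 | TD \<Rightarrow> n \<ge> 4)"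

definition idx :: "nat \<Rightarrow> nat set" where "idx n = {1..n}"

definition adjacent :: "cartan_type \<Rightarrow> nat \<Rightarrow> nat \<Rightarrow> bool" where
  "adjacent t i j = (case t of
      TD \<Rightarrow> ({i,j} = {1,3} \<or> {i,j} = {2,3} \<or> (3 \<le> min i j \<and> (i = j + 1 \<or> j = i + 1)))
    | _ \<Rightarrow> (i = j + 1 \<or> j = i + 1))"

text \<open>cartan t n j i = <alpha_i, alpha_j^vee>.
  Type B: alpha_1 short, alpha_2 long, so <alpha_1,alpha_2^vee> = -1, <alpha_2,alpha_1^vee> = -2.
  Type C: alpha_1 long, alpha_2 short, so <alpha_1,alpha_2^vee> = -2, <alpha_2,alpha_1^vee> = -1.\<close>
definition cartan :: "cartan_type \<Rightarrow> nat \<Rightarrow> nat \<Rightarrow> nat \<Rightarrow> int" where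
  "cartan t n j i =
     (if i \<notin> idx n \<or> j \<notin> idx n then 0
      else if i = j then 2
      else if \<not> adjacent t i j then 0
      else if t = TB \<and> j = 1 \<and> i = 2 then -2
      else if t = TC \<and> j = 2 \<and> i = 1 then -2
      else -1)"

text \<open>Integral weights in the basis of fundamental weights: lambda j = <lambda, alpha_j^vee>.\<close>
type_synonym weight = "nat \<Rightarrow> int"

definition int_weights :: "nat \<Rightarrow> weight set" where
  "int_weights n = {l. \<forall>j. j \<notin> idx n \<longrightarrow> l j = 0}"

definition dominant_weights :: "nat \<Rightarrow> weight set" where
  "dominant_weights n = {l \<in> int_weights n. \<forall>j. l j \<ge> 0}"

definition fund_weight :: "nat \<Rightarrow> weight" where
  "fund_weight i = (\<lambda>j. if j = i then 1 else 0)"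

text \<open>Simple reflection s_i(lambda) = lambda - <lambda,alpha_i^vee> alpha_i.\<close>
definition srefl :: "cartan_type \<Rightarrow> nat \<Rightarrow> nat \<Rightarrow> weight \<Rightarrow> weight" where
  "srefl t n i l = (\<lambda>j. l j - l i * cartan t n j i)"

definition word_act :: "cartan_type \<Rightarrow> nat \<Rightarrow> nat list \<Rightarrow> weight \<Rightarrow> weight" where
  "word_act t n ws = foldr (srefl t n) ws"

text \<open>The Weyl group, realised faithfully via its action on the weights.\<close>
definition weyl :: "cartan_type \<Rightarrow> nat \<Rightarrow> (weight \<Rightarrow> weight) set" where
  "weyl t n = {word_act t n ws | ws. set ws \<subseteq> idx n}"

definition reduced_expr :: "cartan_type \<Rightarrow> nat \<Rightarrow> nat list \<Rightarrow> (weight \<Rightarrow> weight) \<Rightarrow> bool" where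
  "reduced_expr t n ws w \<longleftrightarrow> set ws \<subseteq> idx n \<and> word_act t n ws = w \<and>
     (\<forall>vs. set vs \<subseteq> idx n \<and> word_act t n vs = w \<longrightarrow> length ws \<le> length vs)"

definition minuscule :: "cartan_type \<Rightarrow> nat \<Rightarrow> weight \<Rightarrow> (weight \<Rightarrow> weight) \<Rightarrow> bool" where
  "minuscule t n \<Lambda> w \<longleftrightarrow> (\<exists>ws. reduced_expr t n ws w \<and>
     (\<forall>p \<in> {1..length ws}. word_act t n (drop p ws) \<Lambda> (ws ! (p - 1)) = 1))"

definition dominant_minuscule :: "cartan_type \<Rightarrow> nat \<Rightarrow> (weight \<Rightarrow> weight) \<Rightarrow> bool" where
  "dominant_minuscule t n w \<longleftrightarrow> w \<in> weyl t n \<and> (\<exists>\<Lambda> \<in> dominant_weights n. minuscule t n \<Lambda> w)"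

definition strong_minuscule :: "cartan_type \<Rightarrow> nat \<Rightarrow> (weight \<Rightarrow> weight) \<Rightarrow> bool" where
  "strong_minuscule t n w \<longleftrightarrow> dominant_minuscule t n w \<and>
     (\<exists>!\<Lambda>. \<Lambda> \<in> dominant_weights n \<and> minuscule t n \<Lambda> w)"

definition Lambda_of :: "cartan_type \<Rightarrow> nat \<Rightarrow> (weight \<Rightarrow> weight) \<Rightarrow> weight" where
  "Lambda_of t n w = (THE \<Lambda>. \<Lambda> \<in> dominant_weights n \<and> minuscule t n \<Lambda> w)"

definition SM :: "cartan_type \<Rightarrow> nat \<Rightarrow> (weight \<Rightarrow> weight) set" where
  "SM t n = {w. strong_minuscule t n w}"

definition SM_i :: "cartan_type \<Rightarrow> nat \<Rightarrow> nat \<Rightarrow> (weight \<Rightarrow> weight) set" where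
  "SM_i t n i = {w \<in> SM t n. Lambda_of t n w = fund_weight i}"

definition Kset :: "cartan_type \<Rightarrow> nat \<Rightarrow> nat set" where
  "Kset t n = (case t of TA \<Rightarrow> idx n | TD \<Rightarrow> idx n | TB \<Rightarrow> {1} | TC \<Rightarrow> idx n - {1})"

end

theory Submission
  imports Defs
begin

text \<open>Read the letters of a \<Lambda>-minuscule word from right to left: each letter i must see
  the value 1 at i on the weight reached so far. If some simple reflection s_j does not occur
  in the word, the same word is minuscule for \<Lambda> + \<Lambda>_j as well, so for a strong minuscule
  element every index occurs. At the first occurrence of i, the letters fired before have
  lowered the value at i by exactly 1 - \<Lambda>(i), and every earlier neighbour of i in the
  Dynkin diagram lowers it by at least 1. Hence \<Lambda>(i) \<in> {0,1}, a vertex of weight 1 fires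
  before all its neighbours, and a vertex of weight 0 has at most one earlier neighbour, joined
  to it by a simple bond. Along any path leaving a vertex of weight 1 first occurrences
  therefore increase, so no second vertex of weight 1 can exist in the connected diagram, and
  \<Lambda> is fundamental; the double bond in types B and C excludes the indices outside K.\<close>

fun minuscule_seq :: "cartan_type \<Rightarrow> nat \<Rightarrow> weight \<Rightarrow> nat list \<Rightarrow> bool" where
  "minuscule_seq t n L [] = True"
| "minuscule_seq t n L (i # vs) \<longleftrightarrow> L i = 1 \<and> minuscule_seq t n (srefl t n i L) vs"

lemma word_act_snoc: "word_act t n (ws @ [i]) L = word_act t n ws (srefl t n i L)"
  by (simp add: word_act_def)

lemma minuscule_condition_iff_seq:
  "(\<forall>p\<in>{1..length ws}. word_act t n (drop p ws) L (ws ! (p - 1)) = 1)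
     \<longleftrightarrow> minuscule_seq t n L (rev ws)"
proof (induction ws arbitrary: L rule: rev_induct)
  case (snoc i ws)
  have "{1..length (ws @ [i])} = insert (Suc (length ws)) {1..length ws}"
    by auto
  moreover have "word_act t n (drop p (ws @ [i])) L ((ws @ [i]) ! (p - 1))
      = word_act t n (drop p ws) (srefl t n i L) (ws ! (p - 1))" if "p \<in> {1..length ws}" for p
    using that by (auto simp: nth_append word_act_snoc)
  ultimately show ?case
    using snoc.IH by (simp add: word_act_def)
qed simp

lemma minuscule_iff_seq:
  "minuscule t n L w \<longleftrightarrow> (\<exists>ws. reduced_expr t n ws w \<and> minuscule_seq t n L (rev ws))"
  unfolding minuscule_def minuscule_condition_iff_seq ..

lemma minuscule_seq_nth:
  assumes "minuscule_seq t n L vs" and "k < length vs"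
  shows "L (vs ! k) - (\<Sum>q<k. cartan t n (vs ! k) (vs ! q)) = 1"
  using assms
proof (induction vs arbitrary: L k)
  case (Cons i vs)
  show ?case
  proof (cases k)
    case (Suc k')
    then have "srefl t n i L (vs ! k') - (\<Sum>q<k'. cartan t n (vs ! k') (vs ! q)) = 1"
      using Cons by simp
    then show ?thesis
      using Cons.prems Suc by (simp add: srefl_def sum.lessThan_Suc_shift del: sum.lessThan_Suc)
  qed (use Cons.prems in simp)
qed simp

lemma minuscule_seq_add_fund_weight:
  assumes "minuscule_seq t n L vs" and "j \<notin> set vs"
  shows "minuscule_seq t n (\<lambda>k. L k + fund_weight j k) vs"
  using assms
proof (induction vs arbitrary: L)
  case (Cons i vs)
  then have "srefl t n i (\<lambda>k. L k + fund_weight j k) = (\<lambda>k. srefl t n i L k + fund_weight j k)"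
    by (auto simp: srefl_def fund_weight_def algebra_simps)
  then show ?case
    using Cons by (auto simp: fund_weight_def)
qed simp

lemma fund_weight_inj: "fund_weight i = fund_weight j \<Longrightarrow> i = j"
  by (metis fund_weight_def zero_neq_one)

lemma SM_minuscule_seq:
  assumes "w \<in> SM t n"
  obtains vs where "minuscule_seq t n (Lambda_of t n w) vs" and "idx n \<subseteq> set vs"
    and "Lambda_of t n w \<in> dominant_weights n"
proof -
  let ?P = "\<lambda>\<Lambda>. \<Lambda> \<in> dominant_weights n \<and> minuscule t n \<Lambda> w"
  have unique: "\<exists>!\<Lambda>. ?P \<Lambda>"
    using assms by (simp add: SM_def strong_minuscule_def)
  then have P: "?P (Lambda_of t n w)"
    unfolding Lambda_of_def by (rule theI')
  then obtain ws where red: "reduced_expr t n ws w"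
    and seq: "minuscule_seq t n (Lambda_of t n w) (rev ws)"
    by (auto simp: minuscule_iff_seq)
  have "j \<in> set ws" if "j \<in> idx n" for j
  proof (rule ccontr)
    assume "j \<notin> set ws"
    define \<Lambda>' where "\<Lambda>' = (\<lambda>k. Lambda_of t n w k + fund_weight j k)"
    have "minuscule_seq t n \<Lambda>' (rev ws)"
      unfolding \<Lambda>'_def using seq \<open>j \<notin> set ws\<close> by (simp add: minuscule_seq_add_fund_weight)
    with red have "minuscule t n \<Lambda>' w"
      by (auto simp: minuscule_iff_seq)
    moreover have "\<Lambda>' \<in> dominant_weights n"
      using P \<open>j \<in> idx n\<close> by (auto simp: \<Lambda>'_def dominant_weights_def int_weights_def fund_weight_def)
    ultimately have "\<Lambda>' = Lambda_of t n w"
      using unique P by blast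
    then show False
      by (metis \<Lambda>'_def add_cancel_left_right fund_weight_def zero_neq_one)
  qed
  then show thesis
    using that[OF seq] P by auto
qed

definition dynkin_path :: "cartan_type \<Rightarrow> nat \<Rightarrow> (nat \<Rightarrow> nat) \<Rightarrow> nat \<Rightarrow> bool" where
  "dynkin_path t n p m \<longleftrightarrow>
     inj_on p {..m} \<and> (\<forall>k\<le>m. p k \<in> idx n) \<and> (\<forall>k<m. adjacent t (p k) (p (Suc k)))"

lemma adjacent_sym: "adjacent t i j = adjacent t j i"
  unfolding adjacent_def by (cases t) (auto simp: insert_commute min.commute)

lemma cartan_offdiag_nonpos: "i \<noteq> j \<Longrightarrow> cartan t n i j \<le> 0"
  unfolding cartan_def by auto

lemma cartan_adjacent:
  "i \<in> idx n \<Longrightarrow> j \<in> idx n \<Longrightarrow> i \<noteq> j \<Longrightarrow> adjacent t i j \<Longrightarrow> cartan t n i j \<le> -1"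
  unfolding cartan_def by (auto simp: adjacent_sym)

lemma dynkin_connected:
  assumes "valid_type t n" and "i \<in> idx n" and "j \<in> idx n" and "i < j"
  obtains p m where "0 < m" "p 0 = i" "p m = j" "dynkin_path t n p m"
proof (cases "t = TD \<and> i < 3")
  case False
  have "dynkin_path t n (\<lambda>k. i + k) (j - i)"
    using assms False by (cases t) (auto simp: dynkin_path_def inj_on_def idx_def adjacent_def)
  then show thesis
    using that[of "j - i" "\<lambda>k. i + k"] assms by simp
next
  case True
  then have "n \<ge> 4"
    using assms by (simp add: valid_type_def)
  show thesis
  proof (cases "j \<ge> 3")
    case True
    have "dynkin_path t n (\<lambda>k. if k = 0 then i else k + 2) (j - 2)"
      using assms \<open>t = TD \<and> i < 3\<close> True
      by (auto simp: dynkin_path_def inj_on_def idx_def adjacent_def)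
    then show thesis
      using that[of "j - 2" "\<lambda>k. if k = 0 then i else k + 2"] True by simp
  next
    case False
    then have "i = 1" "j = 2"
      using assms by (auto simp: idx_def)
    have "dynkin_path t n (\<lambda>k. if k = 0 then 1 else if k = 1 then 3 else 2) 2"
      using \<open>n \<ge> 4\<close> \<open>t = TD \<and> i < 3\<close>
      by (auto simp: dynkin_path_def inj_on_def idx_def adjacent_def less_Suc_eq insert_commute)
    then show thesis
      using that[of 2 "\<lambda>k. if k = 0 then 1 else if k = 1 then 3 else 2"] \<open>i = 1\<close> \<open>j = 2\<close> by simp
  qed
qed

locale covering_minuscule_seq =
  fixes t :: cartan_type and n :: nat and L :: weight and vs :: "nat list"
  assumes seq: "minuscule_seq t n L vs"
    and covers: "idx n \<subseteq> set vs"
    and dominant: "L \<in> dominant_weights n"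
begin

definition first_occ :: "nat \<Rightarrow> nat" where
  "first_occ i = (LEAST k. k < length vs \<and> vs ! k = i)"

lemma first_occ_nth: "i \<in> idx n \<Longrightarrow> first_occ i < length vs \<and> vs ! first_occ i = i"
  unfolding first_occ_def using covers
  by (metis (mono_tags, lifting) LeastI in_mono in_set_conv_nth)

lemma before_first_occ: "i \<in> idx n \<Longrightarrow> q < first_occ i \<Longrightarrow> vs ! q \<noteq> i"
  using first_occ_nth unfolding first_occ_def by (metis (mono_tags, lifting) not_less_Least order.strict_trans)

lemma first_occ_inj: "i \<in> idx n \<Longrightarrow> j \<in> idx n \<Longrightarrow> first_occ i = first_occ j \<Longrightarrow> i = j"
  using first_occ_nth by metis

lemma earlier_sum_le:
  assumes "i \<in> idx n" and "Q \<subseteq> {..<first_occ i}"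
  shows "(\<Sum>q\<in>Q. - cartan t n i (vs ! q)) \<le> 1 - L i"
proof -
  have "(\<Sum>q\<in>Q. - cartan t n i (vs ! q)) \<le> (\<Sum>q<first_occ i. - cartan t n i (vs ! q))"
    using assms before_first_occ[OF assms(1)] cartan_offdiag_nonpos
    by (intro sum_mono2) (auto simp: eq_commute[of i])
  also have "\<dots> = 1 - L i"
    using minuscule_seq_nth[OF seq, of "first_occ i"] first_occ_nth[OF assms(1)] by (simp add: sum_negf)
  finally show ?thesis .
qed

lemma weight_zero_or_one: "L i = 0 \<or> L i = 1"
proof (cases "i \<in> idx n")
  case True
  have "0 \<le> L i" "L i \<le> 1"
    using earlier_sum_le[OF True, of "{}"] dominant by (auto simp: dominant_weights_def)
  then show ?thesis
    by linarith
qed (use dominant in \<open>auto simp: dominant_weights_def int_weights_def\<close>)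

lemma weight_one_in_idx: "L i = 1 \<Longrightarrow> i \<in> idx n"
  using dominant by (auto simp: dominant_weights_def int_weights_def)

lemma first_occ_before_neighbour:
  assumes "i \<in> idx n" "j \<in> idx n" "L i = 1" "adjacent t i j" "i \<noteq> j"
  shows "first_occ i < first_occ j"
proof (rule ccontr)
  assume "\<not> first_occ i < first_occ j"
  then have "first_occ j < first_occ i"
    using first_occ_inj assms by (metis nat_neq_iff)
  then have "- cartan t n i j \<le> 0"
    using earlier_sum_le[OF assms(1), of "{first_occ j}"] first_occ_nth[OF assms(2)] assms(3) by simp
  then show False
    using cartan_adjacent[OF assms(1,2,5,4)] by simp
qed

lemma at_most_one_earlier_neighbour:
  assumes "i \<in> idx n" "j \<in> idx n" "j' \<in> idx n" "L i = 0"
    and "adjacent t i j" "adjacent t i j'" "j \<noteq> i" "j' \<noteq> i"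
    and "first_occ j < first_occ i" "first_occ j' < first_occ i"
  shows "j = j'"
proof (rule ccontr)
  assume "j \<noteq> j'"
  then have "first_occ j \<noteq> first_occ j'"
    using first_occ_inj assms by blast
  then have "- cartan t n i j - cartan t n i j' \<le> 1"
    using earlier_sum_le[OF assms(1), of "{first_occ j, first_occ j'}"] first_occ_nth assms by simp
  then show False
    using cartan_adjacent[of i n j t] cartan_adjacent[of i n j' t] assms by simp
qed

lemma no_earlier_double_bond:
  assumes "i \<in> idx n" "j \<in> idx n" "L i = 0" "cartan t n i j = -2"
  shows "first_occ i < first_occ j"
proof (rule ccontr)
  have "i \<noteq> j"
    using assms by (auto simp: cartan_def split: if_splits)
  moreover assume "\<not> first_occ i < first_occ j"
  ultimately have "first_occ j < first_occ i"
    using first_occ_inj assms by (metis nat_neq_iff)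
  then show False
    using earlier_sum_le[OF assms(1), of "{first_occ j}"] first_occ_nth[OF assms(2)] assms by simp
qed

lemma first_occ_increasing_along_path:
  assumes path: "dynkin_path t n p m" and start: "L (p 0) = 1"
  shows "k < m \<Longrightarrow> first_occ (p k) < first_occ (p (Suc k))"
proof (induction k)
  have inj: "p k \<noteq> p k'" if "k \<le> m" "k' \<le> m" "k \<noteq> k'" for k k'
    using path that by (auto simp: dynkin_path_def inj_on_def)
  have vertex: "p k \<in> idx n" if "k \<le> m" for k
    using path that by (simp add: dynkin_path_def)
  have edge: "adjacent t (p k) (p (Suc k))" "adjacent t (p (Suc k)) (p k)" if "k < m" for k
    using path that adjacent_sym by (auto simp: dynkin_path_def)
  {
    case 0
    then show ?case
      using first_occ_before_neighbour[of "p 0" "p 1"] vertex edge(1) inj[of 0 1] start by simp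
  next
    case (Suc k)
    then have IH: "first_occ (p k) < first_occ (p (Suc k))"
      by simp
    have pk: "p k \<in> idx n" "p (Suc k) \<in> idx n" "p (Suc (Suc k)) \<in> idx n"
      using vertex Suc.prems by auto
    have distinct: "p k \<noteq> p (Suc k)" "p (Suc (Suc k)) \<noteq> p (Suc k)" "p k \<noteq> p (Suc (Suc k))"
      using inj Suc.prems by auto
    show ?case
    proof (cases "L (p (Suc k)) = 1")
      case True
      then show ?thesis
        using first_occ_before_neighbour[OF pk(2,1) True] edge(2)[of k] distinct IH Suc.prems
        by simp
    next
      case False
      then have "L (p (Suc k)) = 0"
        using weight_zero_or_one by auto
      moreover have "first_occ (p (Suc (Suc k))) \<noteq> first_occ (p (Suc k))"
        using first_occ_inj pk distinct by blast
      ultimately show ?thesis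
        using at_most_one_earlier_neighbour[OF pk(2,1,3)] edge(2)[of k] edge(1)[of "Suc k"]
          distinct IH Suc.prems
        by fastforce
    qed
  }
qed

lemma no_path_between_ones:
  assumes "dynkin_path t n p m" "0 < m" "L (p 0) = 1" "L (p m) = 1"
  shows False
proof -
  obtain k where m: "m = Suc k"
    using assms(2) gr0_conv_Suc by blast
  have "first_occ (p k) < first_occ (p m)"
    using first_occ_increasing_along_path[OF assms(1,3), of k] m by simp
  moreover have "p m \<noteq> p k"
    using assms(1) m unfolding dynkin_path_def by (metis atMost_iff inj_on_contraD le_eq_less_or_eq lessI n_not_Suc_n)
  moreover have "p k \<in> idx n" "p m \<in> idx n" "adjacent t (p m) (p k)"
    using assms(1) m adjacent_sym by (auto simp: dynkin_path_def)
  ultimately show False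
    using first_occ_before_neighbour[of "p m" "p k"] assms(4) by simp
qed

lemma weight_one_unique:
  assumes "valid_type t n" "L i = 1" "L j = 1"
  shows "i = j"
proof -
  have False if "L i = 1" "L j = 1" "i < j" for i j
  proof -
    have "i \<in> idx n" "j \<in> idx n"
      using that weight_one_in_idx by auto
    then obtain m p where "0 < m" "p 0 = i" "p m = j" "dynkin_path t n p m"
      using dynkin_connected[OF assms(1)] \<open>i < j\<close> by metis
    then show False
      using no_path_between_ones[of p m] that by simp
  qed
  then show ?thesis
    using assms by (cases i j rule: linorder_cases) auto
qed

lemma eq_fund_weight_hd:
  assumes "valid_type t n"
  shows "L = fund_weight (hd vs)"
proof
  fix i
  have "1 \<in> idx n"
    using assms by (cases t) (auto simp: valid_type_def idx_def)
  then have "L (hd vs) = 1"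
    using covers seq by (cases vs) auto
  then show "L i = fund_weight (hd vs) i"
    using weight_one_unique[OF assms] weight_zero_or_one[of i] by (auto simp: fund_weight_def)
qed

lemma fund_weight_index_in_Kset:
  assumes "valid_type t n" and "L = fund_weight i"
  shows "i \<in> Kset t n"
proof -
  have i: "i \<in> idx n" "L i = 1"
    using weight_one_in_idx assms(2) by (auto simp: fund_weight_def)
  have "n \<ge> 2" if "t = TB \<or> t = TC"
    using assms that by (auto simp: valid_type_def)
  then consider "t = TA \<or> t = TD" | "t = TB" "n \<ge> 2" | "t = TC" "n \<ge> 2"
    by (cases t) auto
  then show ?thesis
  proof cases
    case 1
    then show ?thesis
      using i by (auto simp: Kset_def)
  next
    case 2
    show ?thesis
    proof (rule ccontr)
      assume "i \<notin> Kset t n"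
      then have "i \<ge> 2"
        using 2 i by (auto simp: Kset_def idx_def)
      have "dynkin_path t n (\<lambda>k. i - k) (i - 1)"
        using 2 i by (auto simp: dynkin_path_def inj_on_def idx_def adjacent_def)
      then have "first_occ 2 < first_occ 1"
        using first_occ_increasing_along_path[of "\<lambda>k. i - k" "i - 1" "i - 2"] i \<open>i \<ge> 2\<close>
        by (simp add: Suc_diff_Suc numeral_2_eq_2)
      moreover have "first_occ 1 < first_occ 2"
        using no_earlier_double_bond[of 1 2] 2 \<open>i \<ge> 2\<close> assms(2)
        by (simp add: cartan_def idx_def adjacent_def fund_weight_def)
      ultimately show False
        by simp
    qed
  next
    case 3
    show ?thesis
    proof (rule ccontr)
      assume "i \<notin> Kset t n"
      then have "i = 1"
        using 3 i by (auto simp: Kset_def)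
      have "first_occ 1 < first_occ 2"
        using first_occ_before_neighbour[of 1 2] 3 i \<open>i = 1\<close> by (simp add: idx_def adjacent_def)
      moreover have "first_occ 2 < first_occ 1"
        using no_earlier_double_bond[of 2 1] 3 \<open>i = 1\<close> assms(2)
        by (simp add: cartan_def idx_def adjacent_def fund_weight_def)
      ultimately show False
        by simp
    qed
  qed
qed

end

lemma Lambda_of_SM_fund_weight:
  assumes "valid_type t n" and "w \<in> SM t n"
  shows "\<exists>i \<in> Kset t n. Lambda_of t n w = fund_weight i"
proof -
  obtain vs where "minuscule_seq t n (Lambda_of t n w) vs" "idx n \<subseteq> set vs"
    "Lambda_of t n w \<in> dominant_weights n"
    using SM_minuscule_seq[OF assms(2)] .
  then interpret covering_minuscule_seq t n "Lambda_of t n w" vs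
    by unfold_locales
  show ?thesis
    using eq_fund_weight_hd[OF assms(1)] fund_weight_index_in_Kset[OF assms(1)] by blast
qed

theorem corollary6p4:
  assumes "valid_type t n"
  shows "SM t n = (\<Union>i \<in> Kset t n. SM_i t n i)
       \<and> (\<forall>i \<in> Kset t n. \<forall>j \<in> Kset t n. i \<noteq> j \<longrightarrow> SM_i t n i \<inter> SM_i t n j = {})
       \<and> (\<forall>w \<in> SM t n. \<exists>i \<in> Kset t n. Lambda_of t n w = fund_weight i)"
proof (intro conjI)
  show "\<forall>w \<in> SM t n. \<exists>i \<in> Kset t n. Lambda_of t n w = fund_weight i"
    using Lambda_of_SM_fund_weight[OF assms] by blast
  then show "SM t n = (\<Union>i \<in> Kset t n. SM_i t n i)"
    by (auto simp: SM_i_def)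
  show "\<forall>i \<in> Kset t n. \<forall>j \<in> Kset t n. i \<noteq> j \<longrightarrow> SM_i t n i \<inter> SM_i t n j = {}"
    using fund_weight_inj by (auto simp: SM_i_def)
qed

end
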